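(* Let $G$ be a directed graph without self-loops with integer edge weights. Let $G'$ have vertices $u_A,u_B,u_C$ for each $u\in V(G)$ and, for every edge $(u,v)$ of $G$, edges $(u_A,v_B),(u_B,v_C),(u_C,v_A)$ of the same weight as $(u,v)$. Let $G''$ be obtained from $G'$ by deleting each edge $(u_B,v_C)$ independently with probability $1/2$ and deleting each vertex $u_A$ independently with probability $1/2$. If $G$ has no zero-weight triangle then $G''$ has no zero-weight triangle; if $G$ has a zero-weight triangle then, with probability at least $1/4$, the number of zero-weight triangles in $G''$ is odd.
   Context: A zero-weight triangle in a directed graph is a triple of vertices $a,b,c$ with edges $(a,b),(b,c),(c,a)$ whose weights sum to $0$. *)

theory Defs
  imports "HOL-Probability.Probability"
begin

text \<open>A weighted directed graph is given by a vertex set V, an edge set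
E \<subseteq> V \<times> V, and a weight function w (only its values on edges matter).\<close>

definition zero_triangles ::
  "'v set \<Rightarrow> ('v \<times> 'v) set \<Rightarrow> ('v \<Rightarrow> 'v \<Rightarrow> int) \<Rightarrow> ('v \<times> 'v \<times> 'v) set" where
  "zero_triangles V E w = {(a, b, c). a \<in> V \<and> b \<in> V \<and> c \<in> V \<and>
     (a, b) \<in> E \<and> (b, c) \<in> E \<and> (c, a) \<in> E \<and> w a b + w b c + w c a = 0}"

text \<open>The three copies u_A, u_B, u_C of a vertex u are (u, PA), (u, PB), (u, PC).\<close>
datatype part = PA | PB | PC

definition split_V :: "'a set \<Rightarrow> ('a \<times> part) set" where
  "split_V V = V \<times> UNIV"

definition split_E :: "('a \<times> 'a) set \<Rightarrow> (('a \<times> part) \<times> ('a \<times> part)) set" where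
  "split_E E = {((u, PA), (v, PB)) | u v. (u, v) \<in> E}
             \<union> {((u, PB), (v, PC)) | u v. (u, v) \<in> E}
             \<union> {((u, PC), (v, PA)) | u v. (u, v) \<in> E}"

definition split_w :: "('a \<Rightarrow> 'a \<Rightarrow> int) \<Rightarrow> ('a \<times> part) \<Rightarrow> ('a \<times> part) \<Rightarrow> int" where
  "split_w w x y = w (fst x) (fst y)"

text \<open>The graph G'' for an outcome (D, S): D \<subseteq> E is the set of edges (u,v) of G whose
copy (u_B, v_C) is deleted, S \<subseteq> V the set of vertices u whose copy u_A is deleted
(together with its incident edges).\<close>
definition sampled_V :: "'a set \<Rightarrow> 'a set \<Rightarrow> ('a \<times> part) set" where
  "sampled_V V S = split_V V - {(u, PA) | u. u \<in> S}"

definition sampled_E ::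
  "'a set \<Rightarrow> ('a \<times> 'a) set \<Rightarrow> ('a \<times> 'a) set \<Rightarrow> 'a set \<Rightarrow> (('a \<times> part) \<times> ('a \<times> part)) set" where
  "sampled_E V E D S = {(x, y). (x, y) \<in> split_E E - {((u, PB), (v, PC)) | u v. (u, v) \<in> D}
                           \<and> x \<in> sampled_V V S \<and> y \<in> sampled_V V S}"

end

theory Submission
  imports Defs
begin

text \<open>A zero-weight triangle of \<open>G''\<close> visits the three parts in cyclic order, so it is one of
the three rotations of the lift \<open>(a\<^sub>A, b\<^sub>B, c\<^sub>C)\<close> of a zero-weight triangle \<open>(a, b, c)\<close> of \<open>G\<close>
that survives the sampling, i.e. with \<open>a\<^sub>A\<close> and \<open>(b\<^sub>B, c\<^sub>C)\<close> kept. Hence \<open>G''\<close> has no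
zero-weight triangle if \<open>G\<close> has none, and its number of zero-weight triangles has the parity
of the number of surviving triangles of \<open>G\<close>. Fix a zero-weight triangle \<open>(a\<^sub>0, b\<^sub>0, c\<^sub>0)\<close>
of \<open>G\<close>. By inclusion-exclusion, the four outcomes obtained by toggling the deletion of
\<open>a\<^sub>0\<close> and of \<open>(b\<^sub>0, c\<^sub>0)\<close> have numbers of surviving triangles summing to an odd number,
because \<open>(a\<^sub>0, b\<^sub>0, c\<^sub>0)\<close> is the only triangle affected by both toggles. So every class of
four outcomes contains an outcome with an odd count, which gives probability at least 1/4.\<close>

definition surviving_triangles ::
  "'a set \<Rightarrow> ('a \<times> 'a) set \<Rightarrow> ('a \<Rightarrow> 'a \<Rightarrow> int) \<Rightarrow> ('a \<times> 'a) set \<Rightarrow> 'a set \<Rightarrow> ('a \<times> 'a \<times> 'a) set"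
  where "surviving_triangles V E w D S = {(a, b, c) \<in> zero_triangles V E w. a \<notin> S \<and> (b, c) \<notin> D}"

definition surviving_triangles_at ::
  "'a set \<Rightarrow> ('a \<times> 'a) set \<Rightarrow> ('a \<Rightarrow> 'a \<Rightarrow> int) \<Rightarrow> ('a \<times> 'a) set \<Rightarrow> 'a \<Rightarrow> ('a \<times> 'a \<times> 'a) set"
  where "surviving_triangles_at V E w D a = {(a', b, c) \<in> zero_triangles V E w. a' = a \<and> (b, c) \<notin> D}"

definition lift_A :: "'a \<times> 'a \<times> 'a \<Rightarrow> ('a \<times> part) \<times> ('a \<times> part) \<times> ('a \<times> part)"
  where "lift_A = (\<lambda>(a, b, c). ((a, PA), (b, PB), (c, PC)))"

definition lift_B :: "'a \<times> 'a \<times> 'a \<Rightarrow> ('a \<times> part) \<times> ('a \<times> part) \<times> ('a \<times> part)"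
  where "lift_B = (\<lambda>(a, b, c). ((b, PB), (c, PC), (a, PA)))"

definition lift_C :: "'a \<times> 'a \<times> 'a \<Rightarrow> ('a \<times> part) \<times> ('a \<times> part) \<times> ('a \<times> part)"
  where "lift_C = (\<lambda>(a, b, c). ((c, PC), (a, PA), (b, PB)))"

definition flip :: "'b \<Rightarrow> 'b set \<Rightarrow> 'b set"
  where "flip x A = (if x \<in> A then A - {x} else insert x A)"

lemma mem_surviving_triangles_iff [simp]:
  "(a, b, c) \<in> surviving_triangles V E w D S
     \<longleftrightarrow> (a, b, c) \<in> zero_triangles V E w \<and> a \<notin> S \<and> (b, c) \<notin> D"
  by (simp add: surviving_triangles_def)

lemma finite_zero_triangles: "finite V \<Longrightarrow> finite (zero_triangles V E w)"
  by (rule finite_subset[of _ "V \<times> V \<times> V"]) (auto simp: zero_triangles_def)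

lemma finite_surviving_triangles: "finite V \<Longrightarrow> finite (surviving_triangles V E w D S)"
  by (rule finite_subset[OF _ finite_zero_triangles]) (auto simp: surviving_triangles_def)

lemma mem_sampled_E_iff:
  assumes "E \<subseteq> V \<times> V"
  shows "((u, p), (v, q)) \<in> sampled_E V E D S \<longleftrightarrow> (u, v) \<in> E \<and>
           (p = PA \<and> q = PB \<and> u \<notin> S \<or> p = PB \<and> q = PC \<and> (u, v) \<notin> D \<or> p = PC \<and> q = PA \<and> v \<notin> S)"
  using assms
  by (cases p; cases q) (auto simp: sampled_E_def split_E_def sampled_V_def split_V_def)

lemma lift_image_iff:
  "((a, p), (b, q), (c, r)) \<in> lift_A ` T \<longleftrightarrow> p = PA \<and> q = PB \<and> r = PC \<and> (a, b, c) \<in> T"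
  "((a, p), (b, q), (c, r)) \<in> lift_B ` T \<longleftrightarrow> p = PB \<and> q = PC \<and> r = PA \<and> (c, a, b) \<in> T"
  "((a, p), (b, q), (c, r)) \<in> lift_C ` T \<longleftrightarrow> p = PC \<and> q = PA \<and> r = PB \<and> (b, c, a) \<in> T"
  by (force simp: lift_A_def lift_B_def lift_C_def)+

lemma zero_triangles_sampled_eq:
  assumes "E \<subseteq> V \<times> V"
  shows "zero_triangles (sampled_V V S) (sampled_E V E D S) (split_w w)
           = lift_A ` surviving_triangles V E w D S \<union> lift_B ` surviving_triangles V E w D S
             \<union> lift_C ` surviving_triangles V E w D S" (is "_ = lift_A ` ?T \<union> lift_B ` ?T \<union> lift_C ` ?T")
proof (rule set_eqI)
  fix x :: "('a \<times> part) \<times> ('a \<times> part) \<times> ('a \<times> part)"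
  obtain a p b q c r where x: "x = ((a, p), (b, q), (c, r))"
    by (metis prod.exhaust)
  show "x \<in> zero_triangles (sampled_V V S) (sampled_E V E D S) (split_w w)
          \<longleftrightarrow> x \<in> lift_A ` ?T \<union> lift_B ` ?T \<union> lift_C ` ?T"
    unfolding x using assms
    by (cases p; cases q; cases r)
      (auto simp: zero_triangles_def mem_sampled_E_iff[OF assms] sampled_V_def split_V_def
        split_w_def lift_image_iff)
qed

lemma card_zero_triangles_sampled:
  assumes "finite V" and "E \<subseteq> V \<times> V"
  shows "card (zero_triangles (sampled_V V S) (sampled_E V E D S) (split_w w))
           = 3 * card (surviving_triangles V E w D S)"
proof -
  let ?T = "surviving_triangles V E w D S"
  have fin: "finite ?T"
    using assms(1) by (rule finite_surviving_triangles)
  have inj: "inj_on lift_A ?T" "inj_on lift_B ?T" "inj_on lift_C ?T"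
    by (auto simp: inj_on_def lift_A_def lift_B_def lift_C_def)
  have disj: "lift_A ` ?T \<inter> lift_B ` ?T = {}" "(lift_A ` ?T \<union> lift_B ` ?T) \<inter> lift_C ` ?T = {}"
    by (auto simp: lift_A_def lift_B_def lift_C_def)
  show ?thesis
    using fin inj disj
    by (simp add: zero_triangles_sampled_eq[OF assms(2)] card_Un_disjoint card_image)
qed

lemma card_surviving_triangles_flip_vertex:
  assumes "finite V"
  shows "card (surviving_triangles V E w D (S - {a}))
           = card (surviving_triangles V E w D (insert a S))
             + card (surviving_triangles_at V E w D a)"
proof -
  let ?F = "surviving_triangles_at V E w D a"
  have "surviving_triangles V E w D (S - {a}) = surviving_triangles V E w D (insert a S) \<union> ?F"
    and "surviving_triangles V E w D (insert a S) \<inter> ?F = {}"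
    by (auto simp: surviving_triangles_def surviving_triangles_at_def)
  moreover have "finite ?F"
    by (rule finite_subset[OF _ finite_zero_triangles[OF assms]]) (auto simp: surviving_triangles_at_def)
  ultimately show ?thesis
    using finite_surviving_triangles[OF assms] by (simp add: card_Un_disjoint)
qed

lemma card_surviving_triangles_at_flip_edge:
  assumes "finite V" and "(a, b, c) \<in> zero_triangles V E w"
  shows "card (surviving_triangles_at V E w (D - {(b, c)}) a)
           = card (surviving_triangles_at V E w (insert (b, c) D) a) + 1"
proof -
  let ?F = "\<lambda>D. surviving_triangles_at V E w D a"
  have "?F (D - {(b, c)}) = insert (a, b, c) (?F (insert (b, c) D))"
    using assms(2) by (auto simp: surviving_triangles_at_def)
  moreover have "finite (?F (insert (b, c) D))"
    by (rule finite_subset[OF _ finite_zero_triangles[OF assms(1)]])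
      (auto simp: surviving_triangles_at_def)
  moreover have "(a, b, c) \<notin> ?F (insert (b, c) D)"
    by (simp add: surviving_triangles_at_def)
  ultimately show ?thesis
    by simp
qed

lemma exists_odd_surviving_triangles_flip:
  assumes "finite V" and "(a, b, c) \<in> zero_triangles V E w"
  shows "\<exists>D' \<in> {D - {(b, c)}, insert (b, c) D}. \<exists>S' \<in> {S - {a}, insert a S}.
           odd (card (surviving_triangles V E w D' S'))"
proof -
  let ?F = "\<lambda>D. card (surviving_triangles_at V E w D a)"
  obtain D' where D': "D' \<in> {D - {(b, c)}, insert (b, c) D}" and odd_F: "odd (?F D')"
  proof (cases "odd (?F (insert (b, c) D))")
    case False
    then have "odd (?F (D - {(b, c)}))"
      using card_surviving_triangles_at_flip_edge[OF assms, of D] by simp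
    then show ?thesis
      using that by blast
  qed (use that in blast)
  show ?thesis
  proof (cases "odd (card (surviving_triangles V E w D' (insert a S)))")
    case False
    then have "odd (card (surviving_triangles V E w D' (S - {a})))"
      using card_surviving_triangles_flip_vertex[OF assms(1), of E w D' S a] odd_F by simp
    then show ?thesis
      using D' by blast
  qed (use D' in blast)
qed

lemma card_le_length_mult_card_if_covered:
  assumes "finite B" and "A \<subseteq> (\<Union>f \<in> set fs. f ` B)"
  shows "card A \<le> length fs * card B"
proof -
  have "card A \<le> card (\<Union>f \<in> set fs. f ` B)"
    using assms by (intro card_mono) auto
  also have "\<dots> \<le> (\<Sum>f \<in> set fs. card (f ` B))"
    by (rule card_UN_le) simp
  also have "\<dots> \<le> (\<Sum>f \<in> set fs. card B)"
    using assms(1) by (intro sum_mono card_image_le)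
  also have "\<dots> \<le> length fs * card B"
    by (simp add: card_length)
  finally show ?thesis .
qed

lemma prob_pmf_of_set_ge_inverse:
  assumes "finite \<Omega>" and "\<Omega> \<noteq> {}" and "card \<Omega> \<le> k * card (\<Omega> \<inter> A)"
  shows "measure_pmf.prob (pmf_of_set \<Omega>) A \<ge> 1 / k"
proof -
  have "0 < card \<Omega>"
    using assms(1,2) by (simp add: card_gt_0_iff)
  moreover have "0 < k"
    using \<open>0 < card \<Omega>\<close> assms(3) by (cases k) auto
  moreover have "real (card \<Omega>) \<le> real k * real (card (\<Omega> \<inter> A))"
    using assms(3) of_nat_mono by fastforce
  ultimately show ?thesis
    using assms(1,2) by (simp add: measure_pmf_of_set field_simps)
qed

lemma outcomes_covered_by_flips_of_odd:
  assumes "finite V" and "E \<subseteq> V \<times> V" and t: "(a, b, c) \<in> zero_triangles V E w"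
  defines "\<sigma> \<equiv> apfst (flip (b, c))" and "\<tau> \<equiv> apsnd (flip a)"
  shows "Pow E \<times> Pow V \<subseteq> (\<Union>f \<in> set [id, \<sigma>, \<tau>, \<sigma> \<circ> \<tau>].
           f ` {(D, S) \<in> Pow E \<times> Pow V. odd (card (surviving_triangles V E w D S))})"
proof (clarify)
  fix D S assume "D \<subseteq> E" "S \<subseteq> V"
  obtain D' S' where D': "D' \<in> {D - {(b, c)}, insert (b, c) D}" and S': "S' \<in> {S - {a}, insert a S}"
    and odd: "odd (card (surviving_triangles V E w D' S'))"
    using exists_odd_surviving_triangles_flip[OF assms(1) t] by blast
  have "(b, c) \<in> E" "a \<in> V"
    using t by (auto simp: zero_triangles_def)
  then have "(D', S') \<in> Pow E \<times> Pow V"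
    using D' S' \<open>D \<subseteq> E\<close> \<open>S \<subseteq> V\<close> by auto
  moreover have "D = D' \<or> D = flip (b, c) D'" and "S = S' \<or> S = flip a S'"
    using D' S' by (auto simp: flip_def)
  then have "(D, S) \<in> {(D', S'), \<sigma> (D', S'), \<tau> (D', S'), (\<sigma> \<circ> \<tau>) (D', S')}"
    by (auto simp: \<sigma>_def \<tau>_def)
  ultimately show "(D, S) \<in> (\<Union>f \<in> set [id, \<sigma>, \<tau>, \<sigma> \<circ> \<tau>].
           f ` {(D, S) \<in> Pow E \<times> Pow V. odd (card (surviving_triangles V E w D S))})"
    using odd by auto
qed

theorem mainTheorem15:
  fixes V :: "'a set" and E :: "('a \<times> 'a) set" and w :: "'a \<Rightarrow> 'a \<Rightarrow> int"
  assumes "finite V" and "E \<subseteq> V \<times> V" and "\<forall>v. (v, v) \<notin> E"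
  shows "(zero_triangles V E w = {} \<longrightarrow>
           (\<forall>D S. D \<subseteq> E \<longrightarrow> S \<subseteq> V \<longrightarrow>
              zero_triangles (sampled_V V S) (sampled_E V E D S) (split_w w) = {}))
       \<and> (zero_triangles V E w \<noteq> {} \<longrightarrow>
           measure_pmf.prob (pmf_of_set (Pow E \<times> Pow V))
             {(D, S). odd (card (zero_triangles (sampled_V V S) (sampled_E V E D S) (split_w w)))}
           \<ge> 1 / 4)"
proof (intro conjI impI)
  assume "zero_triangles V E w = {}"
  then show "\<forall>D S. D \<subseteq> E \<longrightarrow> S \<subseteq> V \<longrightarrow>
               zero_triangles (sampled_V V S) (sampled_E V E D S) (split_w w) = {}"
    by (simp add: zero_triangles_sampled_eq[OF assms(2)] surviving_triangles_def)
next
  let ?\<Omega> = "Pow E \<times> Pow V"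
  let ?odd = "{(D, S). odd (card (zero_triangles (sampled_V V S) (sampled_E V E D S) (split_w w)))}"
  assume "zero_triangles V E w \<noteq> {}"
  then obtain a b c where t: "(a, b, c) \<in> zero_triangles V E w"
    by auto
  have "finite ?\<Omega>"
    using assms(1,2) by (simp add: finite_subset[OF assms(2)])
  define odd_outcomes where
    "odd_outcomes = {(D, S) \<in> ?\<Omega>. odd (card (surviving_triangles V E w D S))}"
  have "finite odd_outcomes"
    using \<open>finite ?\<Omega>\<close> unfolding odd_outcomes_def by (rule finite_subset[rotated]) auto
  from card_le_length_mult_card_if_covered[OF this
      outcomes_covered_by_flips_of_odd[OF assms(1,2) t, folded odd_outcomes_def]]
  have "card ?\<Omega> \<le> 4 * card odd_outcomes"
    by simp
  moreover have "odd_outcomes = ?\<Omega> \<inter> ?odd"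
    by (auto simp: odd_outcomes_def card_zero_triangles_sampled[OF assms(1,2)])
  ultimately show "measure_pmf.prob (pmf_of_set ?\<Omega>) ?odd \<ge> 1 / 4"
    using prob_pmf_of_set_ge_inverse[OF \<open>finite ?\<Omega>\<close>] by fastforce
qed

end
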